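(* Let $X$ be a precubical set and $\gamma:\vec{\mathbb{S}}\to\vec{|X|}$ a stream map. Then $\gamma$ is constant if and only if the underlying continuous map $U(\gamma):\mathbb{S}\to|X|$ is null-homotopic.
   Context: Streams: a circulation on a space $X$ assigns to each open $V\subset X$ a preorder $\leqslant_V$ such that for every collection $\mathcal{O}$ of open sets, $\leqslant_{\bigcup\mathcal{O}}$ is the preorder with smallest graph containing $\bigcup_{V\in\mathcal{O}}\mathrm{graph}(\leqslant_V)$; a stream is a space with a circulation; a stream map $f:X\to Y$ is continuous with $f(x)\leqslant_V f(y)$ whenever $x\leqslant_{f^{-1}V}y$; $U$ is the forgetful functor to spaces; streams form a cocomplete category with colimits computed on underlying spaces (final circulation). $\vec{\mathbb{S}}$ is the unit circle with circulation: $z\leqslant_V z'$ iff there are reals $\theta\le\theta'$ with $z=e^{i\theta}$, $z'=e^{i\theta'}$, $e^{i[\theta,\theta']}\subset V$. Precubical sets: $\square$ is the smallest subcategory of posets and monotone maps closed under cartesian products (unit $[0]=\{0\}$) and containing $\delta_\pm:[0]\to[1]=\{0<1\}$ ($0\mapsto 0$, resp. $1$); objects $[1]^n$. A precubical set is a functor $X:\square^{op}\to\mathbf{Set}$, $X_n=X([1]^n)$. $\vec\square[1]$ is $[0,1]$ with circulation $x\leqslant_V y$ iff $x\le y$ and $[x,y]\subset V$; $\vec\square[n]$ is its $n$-fold product in streams, and $\square$-morphisms extend linearly to stream maps. The stream realization is the coend $\vec{|X|}=\int^{[1]^n}X_n\cdot\vec\square[n]$ in streams; its underlying space is the geometric realization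 $|X|$. *)

theory Defs
  imports "HOL-Analysis.Analysis"
begin

text \<open>Smallest preorder on A whose graph contains R (R is assumed to lie in A x A).\<close>
definition pclosure :: "'a set \<Rightarrow> ('a \<times> 'a) set \<Rightarrow> ('a \<times> 'a) set" where
  "pclosure A R = Id_on A \<union> R\<^sup>+"

definition is_circulation :: "'a topology \<Rightarrow> ('a set \<Rightarrow> ('a \<times> 'a) set) \<Rightarrow> bool" where
  "is_circulation T C \<longleftrightarrow>
     (\<forall>V. openin T V \<longrightarrow> C V \<subseteq> V \<times> V \<and> refl_on V (C V) \<and> trans (C V)) \<and>
     (\<forall>Ws. (\<forall>V\<in>Ws. openin T V) \<longrightarrow> C (\<Union>Ws) = pclosure (\<Union>Ws) (\<Union>V\<in>Ws. C V))"

definition stream_map ::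
  "'a topology \<Rightarrow> ('a set \<Rightarrow> ('a \<times> 'a) set) \<Rightarrow> 'b topology \<Rightarrow> ('b set \<Rightarrow> ('b \<times> 'b) set)
   \<Rightarrow> ('a \<Rightarrow> 'b) \<Rightarrow> bool" where
  "stream_map T1 C1 T2 C2 f \<longleftrightarrow> continuous_map T1 T2 f \<and>
     (\<forall>V. openin T2 V \<longrightarrow>
        (\<forall>x y. (x, y) \<in> C1 {z \<in> topspace T1. f z \<in> V} \<longrightarrow> (f x, f y) \<in> C2 V))"

definition circle_top :: "complex topology" where
  "circle_top = top_of_set (sphere 0 1)"

definition circle_circ :: "complex set \<Rightarrow> (complex \<times> complex) set" where
  "circle_circ V = {(z, z'). \<exists>\<theta> \<theta>'. \<theta> \<le> \<theta>' \<and> z = cis \<theta> \<and> z' = cis \<theta>' \<and> cis ` {\<theta>..\<theta>'} \<subseteq> V}"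

definition I_top :: "real topology" where
  "I_top = top_of_set {0..1}"

definition I_circ :: "real set \<Rightarrow> (real \<times> real) set" where
  "I_circ V = {(x, y). x \<le> y \<and> {x..y} \<subseteq> V}"

text \<open>The n-cube [0,1]^n, realised as functions nat => real vanishing from n on.\<close>
definition cube :: "nat \<Rightarrow> (nat \<Rightarrow> real) set" where
  "cube n = {t. (\<forall>i<n. 0 \<le> t i \<and> t i \<le> 1) \<and> (\<forall>i\<ge>n. t i = 0)}"

definition cube_top :: "nat \<Rightarrow> (nat \<Rightarrow> real) topology" where
  "cube_top n = subtopology (product_topology (\<lambda>_. euclideanreal) UNIV) (cube n)"

text \<open>The n-fold product of the directed interval in streams: the largest circulation on the
  product space making all projections stream maps (the join of all such circulations,
  i.e. the pointwise preorder closure of their union).\<close>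
definition cube_circ :: "nat \<Rightarrow> (nat \<Rightarrow> real) set \<Rightarrow> ((nat \<Rightarrow> real) \<times> (nat \<Rightarrow> real)) set" where
  "cube_circ n V = pclosure V (\<Union>{C V | C. is_circulation (cube_top n) C \<and>
        (\<forall>i<n. stream_map (cube_top n) C I_top I_circ (\<lambda>t. t i))})"

text \<open>Objects [1]^n are bool lists of length n (False < True); a morphism [1]^m -> [1]^n is a
  triple (m, n, f) with f normalised outside its domain.\<close>
type_synonym cmor = "nat \<times> nat \<times> (bool list \<Rightarrow> bool list)"

definition cmor :: "nat \<Rightarrow> nat \<Rightarrow> (bool list \<Rightarrow> bool list) \<Rightarrow> cmor" where
  "cmor m n f = (m, n, \<lambda>v. if length v = m then f v else [])"

text \<open>The smallest subcategory of posets closed under cartesian products (unit [0]) and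
  containing delta_-, delta_+.\<close>
inductive_set Box :: "cmor set" where
  Box_id: "cmor n n id \<in> Box"
| Box_dminus: "cmor 0 1 (\<lambda>_. [False]) \<in> Box"
| Box_dplus: "cmor 0 1 (\<lambda>_. [True]) \<in> Box"
| Box_comp: "(m, n, f) \<in> Box \<Longrightarrow> (n, k, g) \<in> Box \<Longrightarrow> cmor m k (g \<circ> f) \<in> Box"
| Box_prod: "(m, n, f) \<in> Box \<Longrightarrow> (m', n', g) \<in> Box \<Longrightarrow>
     cmor (m + m') (n + n') (\<lambda>v. f (take m v) @ g (drop m v)) \<in> Box"

text \<open>A precubical set: a functor Box^op -> Set, given by the sets X n and the action.\<close>
definition precubical :: "(nat \<Rightarrow> 'a set) \<Rightarrow> (cmor \<Rightarrow> 'a \<Rightarrow> 'a) \<Rightarrow> bool" where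
  "precubical X act \<longleftrightarrow>
     (\<forall>m n f x. (m, n, f) \<in> Box \<and> x \<in> X n \<longrightarrow> act (m, n, f) x \<in> X m) \<and>
     (\<forall>n x. x \<in> X n \<longrightarrow> act (cmor n n id) x = x) \<and>
     (\<forall>m n k f g x. (m, n, f) \<in> Box \<and> (n, k, g) \<in> Box \<and> x \<in> X k \<longrightarrow>
        act (cmor m k (g \<circ> f)) x = act (m, n, f) (act (n, k, g) x))"

text \<open>Linear (multilinear) extension of a cube morphism to [0,1]^m -> [0,1]^n.\<close>
definition lin :: "cmor \<Rightarrow> (nat \<Rightarrow> real) \<Rightarrow> (nat \<Rightarrow> real)" where
  "lin F t = (case F of (m, n, f) \<Rightarrow> (\<lambda>j. if j < n then
      (\<Sum>v\<in>{v::bool list. length v = m}. (if f v ! j then 1 else 0) *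
          (\<Prod>i<m. if v ! i then t i else 1 - t i))
      else 0))"

definition real_dom :: "(nat \<Rightarrow> 'a set) \<Rightarrow> (nat \<times> 'a \<times> (nat \<Rightarrow> real)) set" where
  "real_dom X = {(n, x, t). x \<in> X n \<and> t \<in> cube n}"

definition real_gen :: "(nat \<Rightarrow> 'a set) \<Rightarrow> (cmor \<Rightarrow> 'a \<Rightarrow> 'a) \<Rightarrow>
    ((nat \<times> 'a \<times> (nat \<Rightarrow> real)) \<times> (nat \<times> 'a \<times> (nat \<Rightarrow> real))) set" where
  "real_gen X act = {((m, act (m, n, f) x, t), (n, x, lin (m, n, f) t)) | m n f x t.
       (m, n, f) \<in> Box \<and> x \<in> X n \<and> t \<in> cube m}"

definition real_rel :: "(nat \<Rightarrow> 'a set) \<Rightarrow> (cmor \<Rightarrow> 'a \<Rightarrow> 'a) \<Rightarrow>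
    ((nat \<times> 'a \<times> (nat \<Rightarrow> real)) \<times> (nat \<times> 'a \<times> (nat \<Rightarrow> real))) set" where
  "real_rel X act = Id_on (real_dom X) \<union> (real_gen X act \<union> (real_gen X act)\<inverse>)\<^sup>+"

definition real_pts :: "(nat \<Rightarrow> 'a set) \<Rightarrow> (cmor \<Rightarrow> 'a \<Rightarrow> 'a) \<Rightarrow>
    (nat \<times> 'a \<times> (nat \<Rightarrow> real)) set set" where
  "real_pts X act = real_dom X // real_rel X act"

definition char_map :: "(nat \<Rightarrow> 'a set) \<Rightarrow> (cmor \<Rightarrow> 'a \<Rightarrow> 'a) \<Rightarrow> nat \<Rightarrow> 'a \<Rightarrow>
    (nat \<Rightarrow> real) \<Rightarrow> (nat \<times> 'a \<times> (nat \<Rightarrow> real)) set" where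
  "char_map X act n x t = real_rel X act `` {(n, x, t)}"

definition real_top :: "(nat \<Rightarrow> 'a set) \<Rightarrow> (cmor \<Rightarrow> 'a \<Rightarrow> 'a) \<Rightarrow>
    (nat \<times> 'a \<times> (nat \<Rightarrow> real)) set topology" where
  "real_top X act = topology (\<lambda>U. U \<subseteq> real_pts X act \<and>
     (\<forall>n x. x \<in> X n \<longrightarrow> openin (cube_top n) {t \<in> cube n. char_map X act n x t \<in> U}))"

definition real_circ :: "(nat \<Rightarrow> 'a set) \<Rightarrow> (cmor \<Rightarrow> 'a \<Rightarrow> 'a) \<Rightarrow>
    (nat \<times> 'a \<times> (nat \<Rightarrow> real)) set set \<Rightarrow>
    ((nat \<times> 'a \<times> (nat \<Rightarrow> real)) set \<times> (nat \<times> 'a \<times> (nat \<Rightarrow> real)) set) set" where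
  "real_circ X act V = pclosure V
     {(char_map X act n x s, char_map X act n x t) | n x s t.
        x \<in> X n \<and> (s, t) \<in> cube_circ n {r \<in> cube n. char_map X act n x r \<in> V}}"

end

theory Submission
  imports Defs
begin

(*
  The proof uses a "phase" map  phase : |X| -> S^1  sending the class of
  (n, x, t) to exp(2 pi i (t_0 + ... + t_(n-1))).  It is well defined because
  every cube morphism shifts the number of 1-coordinates of a vertex by a
  constant, so its multilinear extension changes the coordinate sum by an
  integer.  Directed pairs in a cube have coordinatewise increasing entries, so
  on a small "sector" of |X| (where the phase stays within pi/3 of a fixed
  angle) a local continuous branch of the argument of the phase is
  non-decreasing along the circulation, and strictly increasing unless the two
  points coincide.  If the loop is null-homotopic, its composite with the phase
  has a global continuous logarithm h.  Locally h is non-decreasing along the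
  loop, with equality only where the loop stays put; chaining these local
  steps around the circle and using h(2 pi) = h(0) forces the loop to be
  constant.
*)

section \<open>Cube morphisms shift coordinate sums by integers\<close>

definition true_count :: "bool list \<Rightarrow> nat" where
  "true_count v = length (filter id v)"

lemma Box_true_count_shift:
  "F \<in> Box \<Longrightarrow> (case F of (m, n, f) \<Rightarrow> (\<forall>v. length v = m \<longrightarrow> length (f v) = n) \<and>
     (\<exists>c::nat. \<forall>v. length v = m \<longrightarrow> true_count (f v) = true_count v + c))"
proof (induction rule: Box.induct)
  case (Box_id n)
  then show ?case by (auto simp: cmor_def)
next
  case Box_dminus
  then show ?case by (auto simp: cmor_def true_count_def)
next
  case Box_dplus
  then show ?case by (auto simp: cmor_def true_count_def)
next
  case (Box_comp m n f k g)
  then obtain c1 c2 where "\<forall>v. length v = m \<longrightarrow> true_count (f v) = true_count v + c1"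
     and "\<forall>v. length v = n \<longrightarrow> true_count (g v) = true_count v + c2" by auto
  with Box_comp.IH show ?case
    by (auto simp: cmor_def intro!: exI[of _ "c1 + c2"])
next
  case (Box_prod m n f m' n' g)
  then obtain c1 c2 where c1: "\<forall>v. length v = m \<longrightarrow> true_count (f v) = true_count v + c1"
     and c2: "\<forall>v. length v = m' \<longrightarrow> true_count (g v) = true_count v + c2" by auto
  have "true_count (f (take m v) @ g (drop m v)) = true_count v + (c1 + c2)"
    if "length v = m + m'" for v
  proof -
    have "true_count v = true_count (take m v) + true_count (drop m v)"
      by (metis append_take_drop_id true_count_def filter_append length_append)
    then show ?thesis using c1 c2 that by (simp add: true_count_def)
  qed
  with Box_prod.IH show ?case
    by (auto simp: cmor_def intro!: exI[of _ "c1 + c2"])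
qed

definition vertex_weight :: "(nat \<Rightarrow> real) \<Rightarrow> bool list \<Rightarrow> real" where
  "vertex_weight t v = (\<Prod>i<length v. if v ! i then t i else 1 - t i)"

lemma vertex_weight_Cons:
  "vertex_weight t (b # v) = (if b then t 0 else 1 - t 0) * vertex_weight (\<lambda>i. t (Suc i)) v"
  unfolding vertex_weight_def length_Cons prod.lessThan_Suc_shift by simp

lemma sum_bool_lists_Suc:
  fixes F :: "bool list \<Rightarrow> real"
  shows "(\<Sum>v\<in>{v. length v = Suc m}. F v) =
     (\<Sum>v\<in>{v. length v = m}. F (True # v)) + (\<Sum>v\<in>{v. length v = m}. F (False # v))"
proof -
  let ?A = "{v::bool list. length v = m}"
  have split: "{v::bool list. length v = Suc m} = Cons True ` ?A \<union> Cons False ` ?A"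
    by (auto simp: length_Suc_conv image_iff)
  have "(\<Sum>v\<in>{v. length v = Suc m}. F v) =
      (\<Sum>v\<in>Cons True ` ?A. F v) + (\<Sum>v\<in>Cons False ` ?A. F v)"
    unfolding split by (rule sum.union_disjoint) (auto intro: finite_list_length)
  then show ?thesis by (simp add: sum.reindex)
qed

lemma sum_vertex_weight: "(\<Sum>v\<in>{v. length v = m}. vertex_weight t v) = 1"
proof (induction m arbitrary: t)
  case 0
  then show ?case by (simp add: vertex_weight_def)
next
  case (Suc m)
  show ?case unfolding sum_bool_lists_Suc vertex_weight_Cons
    by (simp add: sum_distrib_left[symmetric] Suc)
qed

lemma sum_true_count_weight:
  "(\<Sum>v\<in>{v. length v = m}. real (true_count v) * vertex_weight t v) = (\<Sum>i<m. t i)"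
proof (induction m arbitrary: t)
  case 0
  then show ?case by (simp add: vertex_weight_def true_count_def)
next
  case (Suc m)
  let ?t' = "\<lambda>i. t (Suc i)"
  have "(\<Sum>v\<in>{v. length v = Suc m}. real (true_count v) * vertex_weight t v)
     = (\<Sum>v\<in>{v. length v = m}. (1 + real (true_count v)) * (t 0 * vertex_weight ?t' v))
       + (\<Sum>v\<in>{v. length v = m}. real (true_count v) * ((1 - t 0) * vertex_weight ?t' v))"
    unfolding sum_bool_lists_Suc vertex_weight_Cons by (simp add: true_count_def)
  also have "\<dots> = t 0 * (\<Sum>v\<in>{v. length v = m}. vertex_weight ?t' v)
       + (\<Sum>v\<in>{v. length v = m}. real (true_count v) * vertex_weight ?t' v)"
    by (simp add: algebra_simps sum.distrib sum_distrib_left sum_subtractf)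
  also have "\<dots> = t 0 + (\<Sum>i<m. t (Suc i))" by (simp add: sum_vertex_weight Suc)
  also have "\<dots> = (\<Sum>i<Suc m. t i)" by (rule sum.lessThan_Suc_shift[symmetric])
  finally show ?case .
qed

lemma lin_coord_sum:
  assumes "(m, n, f) \<in> Box"
  shows "\<exists>c::nat. (\<Sum>j<n. lin (m, n, f) t j) = (\<Sum>i<m. t i) + real c"
proof -
  from Box_true_count_shift[OF assms] obtain c
    where len: "\<And>v. length v = m \<Longrightarrow> length (f v) = n"
      and c: "\<And>v. length v = m \<Longrightarrow> true_count (f v) = true_count v + c" by auto
  have "(\<Sum>j<n. lin (m, n, f) t j) =
     (\<Sum>v\<in>{v. length v = m}. (\<Sum>j<n. if f v ! j then 1 else 0) * vertex_weight t v)"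
    by (simp add: lin_def vertex_weight_def sum.swap[of _ "{..<n}"] sum_distrib_right)
  also have "\<dots> = (\<Sum>v\<in>{v. length v = m}. (real (true_count v) + real c) * vertex_weight t v)"
  proof (rule sum.cong[OF refl])
    fix v :: "bool list" assume "v \<in> {v. length v = m}"
    then have lv: "length v = m" by simp
    have "(\<Sum>j<n. if f v ! j then 1 else 0::real) = real (card {j. j < n \<and> f v ! j})"
      by (simp add: sum.If_cases Collect_conj_eq lessThan_def Int_commute)
    also have "\<dots> = real (true_count (f v))"
      using len[OF lv] by (simp add: true_count_def length_filter_conv_card)
    finally show "(\<Sum>j<n. if f v ! j then 1 else 0) * vertex_weight t v =
        (real (true_count v) + real c) * vertex_weight t v"
      using c[OF lv] by simp
  qed
  also have "\<dots> = (\<Sum>i<m. t i) + real c"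
    by (simp add: algebra_simps sum.distrib sum_true_count_weight sum_vertex_weight
        sum_distrib_left[symmetric])
  finally show ?thesis by blast
qed

section \<open>The phase map of the realization\<close>

definition potential :: "nat \<times> 'a \<times> (nat \<Rightarrow> real) \<Rightarrow> complex" where
  "potential p = cis (2 * pi * (\<Sum>i<fst p. snd (snd p) i))"

lemma potential_real_gen: "(p, q) \<in> real_gen X act \<Longrightarrow> potential p = potential q"
proof -
  assume "(p, q) \<in> real_gen X act"
  then obtain m n f x t where p: "p = (m, act (m, n, f) x, t)" and q: "q = (n, x, lin (m, n, f) t)"
    and B: "(m, n, f) \<in> Box" unfolding real_gen_def by blast
  obtain c :: nat where c: "(\<Sum>j<n. lin (m, n, f) t j) = (\<Sum>i<m. t i) + real c"
    using lin_coord_sum[OF B] by blast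
  have "potential q = cis (2 * pi * (\<Sum>i<m. t i)) * cis (2 * pi * real c)"
    by (simp add: potential_def q c cis_mult algebra_simps)
  also have "cis (2 * pi * real c) = 1" by (simp add: cis_multiple_2pi)
  finally show ?thesis by (simp add: potential_def p)
qed

lemma potential_real_rel: "(p, q) \<in> real_rel X act \<Longrightarrow> potential p = potential q"
proof -
  assume "(p, q) \<in> real_rel X act"
  then consider "p = q" | "(p, q) \<in> (real_gen X act \<union> (real_gen X act)\<inverse>)\<^sup>+"
    unfolding real_rel_def by auto
  then show ?thesis
  proof cases
    case 2
    then show ?thesis
      by (induction rule: trancl_induct) (auto dest: potential_real_gen)
  qed simp
qed

definition phase :: "(nat \<times> 'a \<times> (nat \<Rightarrow> real)) set \<Rightarrow> complex" where
  "phase S = potential (SOME p. p \<in> S)"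

lemma phase_class:
  assumes "p \<in> real_dom X"
  shows "phase (real_rel X act `` {p}) = potential p"
proof -
  have "p \<in> real_rel X act `` {p}" using assms by (auto simp: real_rel_def)
  then have "(SOME q. q \<in> real_rel X act `` {p}) \<in> real_rel X act `` {p}" by (rule someI)
  then show ?thesis unfolding phase_def by (auto dest: potential_real_rel)
qed

lemma phase_char_map:
  "x \<in> X n \<Longrightarrow> t \<in> cube n \<Longrightarrow> phase (char_map X act n x t) = cis (2 * pi * (\<Sum>i<n. t i))"
  unfolding char_map_def by (subst phase_class) (auto simp: real_dom_def potential_def)

lemma phase_in_sphere: "q \<in> real_pts X act \<Longrightarrow> phase q \<in> sphere 0 1"
  unfolding real_pts_def
  by (erule quotientE) (simp add: phase_class potential_def)

lemma topspace_cube_top [simp]: "topspace (cube_top n) = cube n"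
  by (auto simp: cube_top_def)

lemma char_map_in_real_pts: "x \<in> X n \<Longrightarrow> t \<in> cube n \<Longrightarrow> char_map X act n x t \<in> real_pts X act"
  unfolding char_map_def real_pts_def by (rule quotientI) (auto simp: real_dom_def)

text \<open>The final topology with respect to the characteristic maps is a topology, so
  its open sets are exactly the sets with open preimages in every cell.\<close>
lemma openin_real_top:
  "openin (real_top X act) U \<longleftrightarrow> U \<subseteq> real_pts X act \<and>
     (\<forall>n x. x \<in> X n \<longrightarrow> openin (cube_top n) {t \<in> cube n. char_map X act n x t \<in> U})"
proof -
  let ?pre = "\<lambda>n x U. {t \<in> cube n. char_map X act n x t \<in> U}"
  have "istopology (\<lambda>U. U \<subseteq> real_pts X act \<and> (\<forall>n x. x \<in> X n \<longrightarrow> openin (cube_top n) (?pre n x U)))"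
    unfolding istopology_def
  proof (intro conjI allI impI ballI)
    fix S T n x
    assume "S \<subseteq> real_pts X act \<and> (\<forall>n x. x \<in> X n \<longrightarrow> openin (cube_top n) (?pre n x S))"
      and "T \<subseteq> real_pts X act \<and> (\<forall>n x. x \<in> X n \<longrightarrow> openin (cube_top n) (?pre n x T))"
      and "x \<in> X n"
    then have "openin (cube_top n) (?pre n x S \<inter> ?pre n x T)" by blast
    moreover have "?pre n x (S \<inter> T) = ?pre n x S \<inter> ?pre n x T" by blast
    ultimately show "openin (cube_top n) (?pre n x (S \<inter> T))" by simp
  next
    fix K n x
    assume "\<forall>U\<in>K. U \<subseteq> real_pts X act \<and> (\<forall>n x. x \<in> X n \<longrightarrow> openin (cube_top n) (?pre n x U))"
      and "x \<in> X n"
    then have "openin (cube_top n) (\<Union>U\<in>K. ?pre n x U)" by (intro openin_Union) auto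
    moreover have "?pre n x (\<Union>K) = (\<Union>U\<in>K. ?pre n x U)" by blast
    ultimately show "openin (cube_top n) (?pre n x (\<Union>K))" by simp
  qed auto
  then show ?thesis unfolding real_top_def by simp
qed

lemma topspace_real_top [simp]: "topspace (real_top X act) = real_pts X act"
proof
  show "topspace (real_top X act) \<subseteq> real_pts X act"
    by (metis openin_real_top openin_topspace)
  have "openin (real_top X act) (real_pts X act)"
    unfolding openin_real_top
  proof (intro conjI allI impI)
    fix n x assume "x \<in> X n"
    then have "{t \<in> cube n. char_map X act n x t \<in> real_pts X act} = topspace (cube_top n)"
      using char_map_in_real_pts by auto
    then show "openin (cube_top n) {t \<in> cube n. char_map X act n x t \<in> real_pts X act}"
      by (metis openin_topspace)
  qed simp
  then show "real_pts X act \<subseteq> topspace (real_top X act)" by (rule openin_subset)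
qed

lemma continuous_map_coord_sum: "continuous_map (cube_top n) euclideanreal (\<lambda>t. \<Sum>i<n. t i)"
  unfolding cube_top_def
  by (intro continuous_map_from_subtopology continuous_map_sum continuous_map_product_projection) auto

text \<open>A map out of \<open>|X|\<close> is continuous if it is continuous on every cell; for the phase,
  on each cell it is \<open>t \<mapsto> exp(2 \<pi> i \<Sigma> t)\<close>.\<close>
lemma continuous_map_phase: "continuous_map (real_top X act) euclidean phase"
  unfolding continuous_map_def
proof (intro conjI allI impI)
  fix U :: "complex set" assume U: "openin euclidean U"
  have cis_cont: "continuous_map euclideanreal euclidean (\<lambda>s. cis (2 * pi * s))"
    by (simp add: cis_conv_exp continuous_intros)
  show "openin (real_top X act) {q \<in> topspace (real_top X act). phase q \<in> U}"
    unfolding openin_real_top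
  proof (intro conjI allI impI)
    fix n x assume x: "x \<in> X n"
    have "{t \<in> cube n. char_map X act n x t \<in> {q \<in> topspace (real_top X act). phase q \<in> U}}
       = {t \<in> topspace (cube_top n). ((\<lambda>s. cis (2 * pi * s)) \<circ> (\<lambda>t. \<Sum>i<n. t i)) t \<in> U}"
      using x by (auto simp: phase_char_map char_map_in_real_pts)
    then show "openin (cube_top n) {t \<in> cube n. char_map X act n x t \<in> {q \<in> topspace (real_top X act). phase q \<in> U}}"
      using openin_continuous_map_preimage[OF continuous_map_compose[OF continuous_map_coord_sum cis_cont] U]
      by simp
  qed auto
qed auto

section \<open>Circulations on cubes\<close>

lemma circulation_subset: "is_circulation T C \<Longrightarrow> openin T V \<Longrightarrow> C V \<subseteq> V \<times> V"
  unfolding is_circulation_def by blast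

lemma circulation_Union: "is_circulation T C \<Longrightarrow> (\<And>V. V \<in> Ws \<Longrightarrow> openin T V) \<Longrightarrow>
   C (\<Union>Ws) = Id_on (\<Union>Ws) \<union> (\<Union>V\<in>Ws. C V)\<^sup>+"
  unfolding is_circulation_def pclosure_def by blast

text \<open>Circulations are monotone in the open set (apply the union axiom to \<open>{V, W}\<close>).\<close>
lemma circulation_mono:
  assumes C: "is_circulation T C" and "openin T V" "openin T W" "V \<subseteq> W"
  shows "C V \<subseteq> C W"
proof -
  have "C (\<Union>{V, W}) = Id_on (\<Union>{V, W}) \<union> (\<Union>U\<in>{V, W}. C U)\<^sup>+"
    by (rule circulation_Union[OF C]) (use assms in auto)
  moreover have "\<Union>{V, W} = W" using \<open>V \<subseteq> W\<close> by auto
  ultimately have "C W = Id_on W \<union> (C V \<union> C W)\<^sup>+" by simp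
  then show ?thesis by auto
qed

lemma admissible_circulation_le:
  assumes C: "is_circulation (cube_top n) C"
    and proj: "\<forall>i<n. stream_map (cube_top n) C I_top I_circ (\<lambda>t. t i)"
    and W: "openin (cube_top n) W" and st: "(s, t) \<in> C W"
  shows "s i \<le> t i"
proof -
  have Wc: "W \<subseteq> cube n" using openin_subset[OF W] by simp
  with st circulation_subset[OF C W] have sc: "s \<in> cube n" and tc: "t \<in> cube n" by auto
  show ?thesis
  proof (cases "i < n")
    case True
    have "C W \<subseteq> C (cube n)"
      by (rule circulation_mono[OF C W]) (use Wc openin_topspace[of "cube_top n"] in auto)
    moreover have "{z \<in> topspace (cube_top n). z i \<in> {0..1}} = cube n"
      using True by (auto simp: cube_def)
    ultimately have st': "(s, t) \<in> C {z \<in> topspace (cube_top n). z i \<in> {0..1}}"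
      using st by auto
    have "openin I_top {0..1}"
      unfolding I_top_def using openin_topspace[of "top_of_set {0..1::real}"] by simp
    with proj True st' have "(s i, t i) \<in> I_circ {0..1}"
      unfolding stream_map_def by blast
    then show ?thesis by (simp add: I_circ_def)
  next
    case False
    then show ?thesis using sc tc by (simp add: cube_def)
  qed
qed

lemma circulation_respects_labels:
  assumes C: "is_circulation (cube_top n) C"
    and W: "openin (cube_top n) W" and lab: "\<And>k. openin (cube_top n) {r \<in> W. lab r = k}"
    and st: "(s, t) \<in> C W"
  shows "s \<in> W \<and> t \<in> W \<and> lab s = lab t"
proof -
  let ?Ws = "range (\<lambda>k. {r \<in> W. lab r = k})"
  have U: "\<Union>?Ws = W" by auto
  have "C (\<Union>?Ws) = Id_on (\<Union>?Ws) \<union> (\<Union>V\<in>?Ws. C V)\<^sup>+"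
    by (rule circulation_Union[OF C]) (use lab in auto)
  then have eq: "C W = Id_on W \<union> (\<Union>V\<in>?Ws. C V)\<^sup>+" unfolding U .
  have single: "a \<in> W \<and> b \<in> W \<and> lab a = lab b" if "(a, b) \<in> (\<Union>V\<in>?Ws. C V)" for a b
  proof -
    from that obtain k where "(a, b) \<in> C {r \<in> W. lab r = k}" by auto
    with circulation_subset[OF C lab[of k]] show ?thesis by auto
  qed
  have chain: "a \<in> W \<and> b \<in> W \<and> lab a = lab b" if "(a, b) \<in> (\<Union>V\<in>?Ws. C V)\<^sup>+" for a b
    using that
  proof (induction rule: trancl_induct)
    case (step y z)
    then show ?case using single[of y z] by auto
  qed (use single in blast)
  from st eq have "(s, t) \<in> Id_on W \<or> (s, t) \<in> (\<Union>V\<in>?Ws. C V)\<^sup>+" by blast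
  then show ?thesis
  proof
    assume "(s, t) \<in> Id_on W"
    then show ?thesis by auto
  qed (rule chain)
qed

lemma cube_circ_properties:
  assumes W: "openin (cube_top n) W" and lab: "\<And>k. openin (cube_top n) {r \<in> W. lab r = k}"
    and st: "(s, t) \<in> cube_circ n W"
  shows "s \<in> W \<and> t \<in> W \<and> lab s = lab t \<and> (\<forall>i. s i \<le> t i)"
proof -
  let ?P = "\<lambda>a b. a \<in> W \<and> b \<in> W \<and> lab a = lab b \<and> (\<forall>i. a i \<le> b i)"
  let ?R = "\<Union>{C W | C. is_circulation (cube_top n) C \<and>
        (\<forall>i<n. stream_map (cube_top n) C I_top I_circ (\<lambda>t. t i))}"
  have single: "?P a b" if "(a, b) \<in> ?R" for a b
    using that admissible_circulation_le[OF _ _ W] circulation_respects_labels[OF _ W lab] by blast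
  have chain: "?P a b" if "(a, b) \<in> ?R\<^sup>+" for a b
    using that
  proof (induction rule: trancl_induct)
    case (step y z)
    then have "?P a y" "?P y z" using single by blast+
    then show ?case by (auto intro: order_trans)
  qed (use single in blast)
  from st have "(s, t) \<in> Id_on W \<or> (s, t) \<in> ?R\<^sup>+"
    unfolding cube_circ_def pclosure_def by blast
  then show ?thesis
  proof
    assume "(s, t) \<in> Id_on W"
    then show ?thesis by auto
  qed (rule chain)
qed

lemma cube_eq_if_le_and_sum_eq:
  assumes "s \<in> cube n" "t \<in> cube n" "\<And>i. s i \<le> t i" "(\<Sum>i<n. s i) = (\<Sum>i<n. t i)"
  shows "s = t"
proof
  fix i
  have "(\<Sum>i<n. t i - s i) = 0" using assms(4) by (simp add: sum_subtractf)
  then have "\<forall>i\<in>{..<n}. t i - s i = 0"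
    using assms(3) by (subst sum_nonneg_eq_0_iff[symmetric]) auto
  then show "s i = t i" using assms(1,2) by (cases "i < n") (auto simp: cube_def)
qed

section \<open>Angles within \<open>\<pi>/3\<close> of a reference angle\<close>

lemma cos_gt_half: "\<bar>u\<bar> < pi/3 \<Longrightarrow> cos u > 1/2"
proof -
  assume "\<bar>u\<bar> < pi/3"
  then have "cos (pi/3) < cos \<bar>u\<bar>" by (intro cos_monotone_0_pi) auto
  then show ?thesis by (simp add: cos_60)
qed

lemma abs_lt_pi_third_if_cos_gt_half: "cos v > 1/2 \<Longrightarrow> \<bar>v\<bar> \<le> pi \<Longrightarrow> \<bar>v\<bar> < pi/3"
proof (rule ccontr)
  assume "cos v > 1/2" "\<bar>v\<bar> \<le> pi" "\<not> \<bar>v\<bar> < pi/3"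
  then have "cos \<bar>v\<bar> \<le> cos (pi/3)" by (intro cos_monotone_0_pi_le) auto
  with \<open>cos v > 1/2\<close> show False by (simp add: cos_60)
qed

lemma cis_minus_multiple_2pi: "cis (u - 2 * pi * of_int k) = cis u"
proof -
  have "cis (2 * pi * of_int (-k)) = 1" by (rule cis_multiple_2pi) simp
  then show ?thesis by (metis cis_mult diff_conv_add_uminus mult.right_neutral mult_minus_right of_int_minus)
qed

lemma Re_cis_mult_cnj: "Re (cis u * cnj (cis a)) = cos (u - a)"
  by (simp add: cis_cnj cis_mult)

lemma near_multiple_2pi: "cos w > 1/2 \<Longrightarrow> \<exists>k::int. \<bar>w - 2 * pi * of_int k\<bar> < pi/3"
proof -
  assume c: "cos w > 1/2"
  define k where "k = \<lfloor>w / (2 * pi) + 1/2\<rfloor>"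
  have "of_int k \<le> w / (2 * pi) + 1/2" "w / (2 * pi) + 1/2 < of_int k + 1"
    unfolding k_def by linarith+
  then have "2 * pi * of_int k \<le> w + pi" "w + pi < 2 * pi * of_int k + 2 * pi"
    using pi_gt_zero by (simp_all add: field_simps)
  moreover have "cos (w - 2 * pi * of_int k) = cos w"
    using cis_minus_multiple_2pi[of w k] by (metis cis.sel(1))
  ultimately have "\<bar>w - 2 * pi * of_int k\<bar> < pi/3"
    using c by (intro abs_lt_pi_third_if_cos_gt_half) auto
  then show ?thesis by blast
qed

lemma near_multiple_2pi_unique:
  "\<bar>w - 2 * pi * of_int k\<bar> < pi/3 \<Longrightarrow> \<bar>w - 2 * pi * of_int k'\<bar> < pi/3 \<Longrightarrow> k = k'"
proof -
  assume "\<bar>w - 2 * pi * of_int k\<bar> < pi/3" "\<bar>w - 2 * pi * of_int k'\<bar> < pi/3"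
  then have "\<bar>2 * pi * (of_int k - of_int k')\<bar> < 2 * pi * 1"
    by (simp add: abs_if algebra_simps split: if_splits)
  then have "\<bar>of_int k - of_int k' :: real\<bar> < 1" by (simp add: abs_mult)
  then show ?thesis by linarith
qed

lemma cis_inj_near: "\<bar>u - a\<bar> < pi/3 \<Longrightarrow> \<bar>u' - a\<bar> < pi/3 \<Longrightarrow> cis u = cis u' \<Longrightarrow> u = u'"
proof -
  assume a: "\<bar>u - a\<bar> < pi/3" and b: "\<bar>u' - a\<bar> < pi/3" and c: "cis u = cis u'"
  have "cos u = cos u'" "sin u = sin u'" using c by (metis cis.sel(1), metis cis.sel(2))
  then have "cos (u - u') = 1" by (simp add: cos_diff)
  then obtain n :: int where n: "u - u' = of_int n * 2 * pi" using cos_one_2pi_int by blast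
  have "\<bar>of_int n * 2 * pi\<bar> < 1 * pi" using a b n by linarith
  then have "\<bar>of_int n :: real\<bar> * 2 < 1" by (simp add: abs_mult)
  then have "n = 0" by linarith
  with n show ?thesis by simp
qed

definition branch :: "real \<Rightarrow> complex \<Rightarrow> real" where
  "branch a w = (SOME u. \<bar>u - a\<bar> < pi/3 \<and> w = cis u)"

lemma branch_cis: "\<bar>u - a\<bar> < pi/3 \<Longrightarrow> branch a (cis u) = u"
proof -
  assume u: "\<bar>u - a\<bar> < pi/3"
  then have "\<exists>u'. \<bar>u' - a\<bar> < pi/3 \<and> cis u = cis u'" by blast
  then have "\<bar>branch a (cis u) - a\<bar> < pi/3 \<and> cis u = cis (branch a (cis u))"
    unfolding branch_def by (rule someI_ex)
  then show ?thesis using cis_inj_near[OF _ u] by metis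
qed

definition sheet :: "real \<Rightarrow> real \<Rightarrow> int" where
  "sheet a u = (SOME k. \<bar>u - a - 2 * pi * of_int k\<bar> < pi/3)"

lemma sheet_eq: "\<bar>u - a - 2 * pi * of_int k\<bar> < pi/3 \<Longrightarrow> sheet a u = k"
proof -
  assume k: "\<bar>u - a - 2 * pi * of_int k\<bar> < pi/3"
  then have "\<bar>u - a - 2 * pi * of_int (sheet a u)\<bar> < pi/3"
    unfolding sheet_def by (rule someI)
  then show ?thesis using near_multiple_2pi_unique k by blast
qed

lemma branch_cis_sheet:
  assumes "cos (u - a) > 1/2"
  shows "\<bar>u - a - 2 * pi * of_int (sheet a u)\<bar> < pi/3"
    and "branch a (cis u) = u - 2 * pi * of_int (sheet a u)"
proof -
  obtain k where "\<bar>u - a - 2 * pi * of_int k\<bar> < pi/3"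
    using near_multiple_2pi[OF assms] by blast
  then show near: "\<bar>u - a - 2 * pi * of_int (sheet a u)\<bar> < pi/3"
    using sheet_eq by simp
  have "branch a (cis (u - 2 * pi * of_int (sheet a u))) = u - 2 * pi * of_int (sheet a u)"
    by (rule branch_cis) (use near in \<open>simp add: algebra_simps\<close>)
  then show "branch a (cis u) = u - 2 * pi * of_int (sheet a u)"
    by (simp only: cis_minus_multiple_2pi)
qed

section \<open>The phase increases along the circulation of a sector\<close>

definition sector :: "(nat \<Rightarrow> 'a set) \<Rightarrow> (cmor \<Rightarrow> 'a \<Rightarrow> 'a) \<Rightarrow> real \<Rightarrow>
    (nat \<times> 'a \<times> (nat \<Rightarrow> real)) set set" where
  "sector X act a = {q \<in> real_pts X act. Re (phase q * cnj (cis a)) > 1/2}"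

lemma openin_sector: "openin (real_top X act) (sector X act a)"
proof -
  have "open {w::complex. 1/2 < Re (w * cnj (cis a))}"
    by (intro open_Collect_less continuous_intros)
  from openin_continuous_map_preimage[OF continuous_map_phase, of _ X act, OF open_openin[THEN iffD1, OF this]]
  show ?thesis by (simp add: sector_def)
qed

definition phase_increasing :: "real \<Rightarrow> (nat \<times> 'a \<times> (nat \<Rightarrow> real)) set \<Rightarrow>
    (nat \<times> 'a \<times> (nat \<Rightarrow> real)) set \<Rightarrow> bool" where
  "phase_increasing a p q \<longleftrightarrow> branch a (phase p) \<le> branch a (phase q) \<and>
     (branch a (phase p) = branch a (phase q) \<longrightarrow> p = q)"

lemma phase_increasing_trans:
  assumes "phase_increasing a p q" "phase_increasing a q r"
  shows "phase_increasing a p r"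
proof -
  let ?b = "\<lambda>p. branch a (phase p)"
  from assms have pq: "?b p \<le> ?b q" "?b p = ?b q \<Longrightarrow> p = q"
    and qr: "?b q \<le> ?b r" "?b q = ?b r \<Longrightarrow> q = r"
    unfolding phase_increasing_def by auto
  have "p = r" if "?b p = ?b r"
    using pq qr that by (metis order_antisym)
  with pq qr show ?thesis unfolding phase_increasing_def by auto
qed

lemma sheet_fibres_open:
  assumes W: "openin (cube_top n) W"
    and near: "\<And>r. r \<in> W \<Longrightarrow> cos (2 * pi * (\<Sum>i<n. r i) - a) > 1/2"
  shows "openin (cube_top n) {r \<in> W. sheet a (2 * pi * (\<Sum>i<n. r i)) = k}"
proof -
  let ?F = "\<lambda>r. 2 * pi * (\<Sum>i<n. r i) - a - 2 * pi * of_int k"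
  have affine: "continuous_map euclideanreal euclideanreal (\<lambda>s. 2 * pi * s - a - 2 * pi * of_int k)"
    by (simp add: continuous_intros)
  have cont: "continuous_map (cube_top n) euclideanreal ?F"
    using continuous_map_compose[OF continuous_map_coord_sum affine] by (simp add: o_def)
  have open_ball: "openin euclideanreal {y::real. \<bar>y\<bar> < pi/3}"
    by (simp add: open_Collect_less continuous_intros)
  from openin_continuous_map_preimage[OF cont open_ball]
  have open_near: "openin (cube_top n) {r \<in> cube n. \<bar>?F r\<bar> < pi/3}" by simp
  have "{r \<in> W. sheet a (2 * pi * (\<Sum>i<n. r i)) = k} = W \<inter> {r \<in> cube n. \<bar>?F r\<bar> < pi/3}"
  proof (intro set_eqI iffI)
    fix r assume "r \<in> {r \<in> W. sheet a (2 * pi * (\<Sum>i<n. r i)) = k}"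
    then show "r \<in> W \<inter> {r \<in> cube n. \<bar>?F r\<bar> < pi/3}"
      using branch_cis_sheet(1)[OF near] openin_subset[OF W] by auto
  next
    fix r assume "r \<in> W \<inter> {r \<in> cube n. \<bar>?F r\<bar> < pi/3}"
    then show "r \<in> {r \<in> W. sheet a (2 * pi * (\<Sum>i<n. r i)) = k}"
      by (simp add: sheet_eq)
  qed
  then show ?thesis using openin_Int[OF W open_near] by simp
qed

text \<open>Directed pairs inside one cell: the coordinate sum increases and the sheet is
  constant, so the branch of the phase increases, strictly unless the points agree.\<close>
lemma cell_circ_phase_increasing:
  assumes x: "x \<in> X n"
    and st: "(s, t) \<in> cube_circ n {r \<in> cube n. char_map X act n x r \<in> sector X act a}"
  shows "phase_increasing a (char_map X act n x s) (char_map X act n x t)"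
proof -
  define W where "W = {r \<in> cube n. char_map X act n x r \<in> sector X act a}"
  let ?sum = "\<lambda>r. 2 * pi * (\<Sum>i<n. r i)"
  have W: "openin (cube_top n) W"
    using openin_sector[of X act a] x unfolding openin_real_top W_def by blast
  have near: "cos (?sum r - a) > 1/2" if "r \<in> W" for r
  proof -
    from that have "Re (phase (char_map X act n x r) * cnj (cis a)) > 1/2" "r \<in> cube n"
      by (auto simp: W_def sector_def)
    then show ?thesis using x phase_char_map Re_cis_mult_cnj by metis
  qed
  have branch_eq: "branch a (phase (char_map X act n x r)) = ?sum r - 2 * pi * of_int (sheet a (?sum r))"
    if "r \<in> W" for r
  proof -
    have "r \<in> cube n" using that by (simp add: W_def)
    then have "phase (char_map X act n x r) = cis (?sum r)" using x by (simp add: phase_char_map)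
    then show ?thesis using branch_cis_sheet(2)[OF near[OF that]] by simp
  qed
  have P: "s \<in> W \<and> t \<in> W \<and> sheet a (?sum s) = sheet a (?sum t) \<and> (\<forall>i. s i \<le> t i)"
    using cube_circ_properties[OF W sheet_fibres_open[OF W near] st[folded W_def]] .
  then have "(\<Sum>i<n. s i) \<le> (\<Sum>i<n. t i)" by (intro sum_mono) auto
  then have le: "?sum s \<le> ?sum t" by simp
  have eq: "s = t" if "?sum s = ?sum t"
    using P that by (intro cube_eq_if_le_and_sum_eq) (auto simp: W_def)
  have "branch a (phase (char_map X act n x s)) = ?sum s - 2 * pi * of_int (sheet a (?sum s))"
    "branch a (phase (char_map X act n x t)) = ?sum t - 2 * pi * of_int (sheet a (?sum s))"
    using P branch_eq by simp_all
  with le eq show ?thesis unfolding phase_increasing_def by auto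
qed

text \<open>By the union axiom the circulation of \<open>|X|\<close> on a sector is generated by the cell
  pieces, so the phase increases along it.\<close>
lemma sector_circ_phase_increasing:
  assumes "(p, q) \<in> real_circ X act (sector X act a)"
  shows "phase_increasing a p q"
proof -
  define R where "R = {(char_map X act n x s, char_map X act n x t) | n x s t.
        x \<in> X n \<and> (s, t) \<in> cube_circ n {r \<in> cube n. char_map X act n x r \<in> sector X act a}}"
  have single: "phase_increasing a p' q'" if "(p', q') \<in> R" for p' q'
  proof -
    from that obtain n x s t where "p' = char_map X act n x s" "q' = char_map X act n x t" "x \<in> X n"
      and "(s, t) \<in> cube_circ n {r \<in> cube n. char_map X act n x r \<in> sector X act a}"
      unfolding R_def by blast
    then show ?thesis using cell_circ_phase_increasing by simp
  qed
  have chain: "phase_increasing a p' q'" if "(p', q') \<in> R\<^sup>+" for p' q'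
    using that
  proof (induction rule: trancl_induct)
    case (step y z)
    then show ?case using phase_increasing_trans single by blast
  qed (rule single)
  from assms have "(p, q) \<in> Id_on (sector X act a) \<or> (p, q) \<in> R\<^sup>+"
    unfolding real_circ_def pclosure_def R_def by blast
  then show ?thesis
  proof
    assume "(p, q) \<in> Id_on (sector X act a)"
    then show ?thesis by (auto simp: phase_increasing_def)
  qed (rule chain)
qed

section \<open>Directed loops and continuous lifts of their phase\<close>

text \<open>If the phase of the stream map \<open>\<gamma>\<close> along the arc from \<open>\<theta>\<close> to \<open>\<theta>'\<close> has a lift \<open>h\<close>
  staying within \<open>\<pi>/3\<close> of \<open>h \<theta>\<close>, the arc maps into a sector, so \<open>h\<close> increases from \<open>\<theta>\<close>
  to \<open>\<theta>'\<close>, strictly unless \<open>\<gamma>\<close> takes the same value at both ends.\<close>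
lemma short_arc_increasing:
  assumes sm: "stream_map circle_top circle_circ (real_top X act) (real_circ X act) \<gamma>"
    and lift: "\<And>\<phi>. phase (\<gamma> (cis \<phi>)) = cis (h \<phi>)"
    and close: "\<And>\<phi>. \<theta> \<le> \<phi> \<Longrightarrow> \<phi> \<le> \<theta>' \<Longrightarrow> \<bar>h \<phi> - h \<theta>\<bar> < pi/3"
    and le: "\<theta> \<le> \<theta>'"
  shows "h \<theta> \<le> h \<theta>' \<and> (h \<theta> = h \<theta>' \<longrightarrow> \<gamma> (cis \<theta>) = \<gamma> (cis \<theta>'))"
proof -
  let ?V = "sector X act (h \<theta>)"
  have "continuous_map circle_top (real_top X act) \<gamma>" using sm by (simp add: stream_map_def)
  then have in_pts: "\<gamma> (cis \<phi>) \<in> real_pts X act" for \<phi>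
    using continuous_map_image_subset_topspace by (fastforce simp: circle_top_def)
  have "\<gamma> (cis \<phi>) \<in> ?V" if "\<theta> \<le> \<phi>" "\<phi> \<le> \<theta>'" for \<phi>
  proof -
    have "Re (phase (\<gamma> (cis \<phi>)) * cnj (cis (h \<theta>))) = cos (h \<phi> - h \<theta>)"
      by (simp only: lift Re_cis_mult_cnj)
    then have "1/2 < Re (phase (\<gamma> (cis \<phi>)) * cnj (cis (h \<theta>)))"
      using cos_gt_half[OF close[OF that]] by linarith
    with in_pts show ?thesis unfolding sector_def by blast
  qed
  then have "cis ` {\<theta>..\<theta>'} \<subseteq> {z \<in> topspace circle_top. \<gamma> z \<in> ?V}"
    by (auto simp: circle_top_def)
  then have "(cis \<theta>, cis \<theta>') \<in> circle_circ {z \<in> topspace circle_top. \<gamma> z \<in> ?V}"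
    unfolding circle_circ_def using le by blast
  then have "(\<gamma> (cis \<theta>), \<gamma> (cis \<theta>')) \<in> real_circ X act ?V"
    using sm openin_sector unfolding stream_map_def by blast
  then have "phase_increasing (h \<theta>) (\<gamma> (cis \<theta>)) (\<gamma> (cis \<theta>'))"
    by (rule sector_circ_phase_increasing)
  moreover have "branch (h \<theta>) (phase (\<gamma> (cis \<phi>))) = h \<phi>" if "\<theta> \<le> \<phi>" "\<phi> \<le> \<theta>'" for \<phi>
    unfolding lift by (rule branch_cis[OF close[OF that]])
  ultimately show ?thesis using le unfolding phase_increasing_def by simp
qed

text \<open>A function increasing on all short subintervals (with the strictness clause) is
  increasing on the whole interval: chain short steps of length \<open>d/2\<close>.\<close>
lemma locally_increasing_chain:
  fixes h :: "real \<Rightarrow> real" and g :: "real \<Rightarrow> 'b"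
  assumes d: "d > 0"
    and local: "\<And>\<theta> \<theta>'. a \<le> \<theta> \<Longrightarrow> \<theta> \<le> \<theta>' \<Longrightarrow> \<theta>' \<le> b \<Longrightarrow> \<theta>' - \<theta> < d \<Longrightarrow>
        h \<theta> \<le> h \<theta>' \<and> (h \<theta> = h \<theta>' \<longrightarrow> g \<theta> = g \<theta>')"
    and "a \<le> \<theta>" "\<theta> \<le> \<theta>'" "\<theta>' \<le> b"
  shows "h \<theta> \<le> h \<theta>' \<and> (h \<theta> = h \<theta>' \<longrightarrow> g \<theta> = g \<theta>')"
proof -
  have steps: "h \<theta> \<le> h \<theta>' \<and> (h \<theta> = h \<theta>' \<longrightarrow> g \<theta> = g \<theta>')"
    if "\<theta> \<le> \<theta>'" "\<theta>' \<le> b" "\<theta>' - \<theta> \<le> real N * (d/2)" for N \<theta>'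
    using that
  proof (induction N arbitrary: \<theta>')
    case 0
    then show ?case by simp
  next
    case (Suc N)
    show ?case
    proof (cases "\<theta>' - \<theta> < d")
      case True
      then show ?thesis using local \<open>a \<le> \<theta>\<close> Suc.prems by blast
    next
      case False
      define m where "m = \<theta>' - d/2"
      have "\<theta> \<le> m" "m \<le> b" "m - \<theta> \<le> real N * (d/2)"
        using False Suc.prems d by (auto simp: m_def algebra_simps)
      then have "h \<theta> \<le> h m \<and> (h \<theta> = h m \<longrightarrow> g \<theta> = g m)"
        using Suc.IH by blast
      moreover have "h m \<le> h \<theta>' \<and> (h m = h \<theta>' \<longrightarrow> g m = g \<theta>')"
        using local[of m \<theta>'] \<open>a \<le> \<theta>\<close> \<open>\<theta> \<le> m\<close> Suc.prems d by (auto simp: m_def)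
      ultimately show ?thesis by force
    qed
  qed
  obtain N :: nat where "(\<theta>' - \<theta>) / (d/2) < real N" using reals_Archimedean2 by blast
  then have "\<theta>' - \<theta> \<le> real N * (d/2)" using d by (simp add: field_simps)
  then show ?thesis using steps assms(4,5) by blast
qed

lemma locally_increasing_loop_constant:
  fixes h :: "real \<Rightarrow> real" and g :: "real \<Rightarrow> 'b"
  assumes d: "d > 0"
    and local: "\<And>\<theta> \<theta>'. a \<le> \<theta> \<Longrightarrow> \<theta> \<le> \<theta>' \<Longrightarrow> \<theta>' \<le> b \<Longrightarrow> \<theta>' - \<theta> < d \<Longrightarrow>
        h \<theta> \<le> h \<theta>' \<and> (h \<theta> = h \<theta>' \<longrightarrow> g \<theta> = g \<theta>')"
    and loop: "h b = h a" and \<theta>: "a \<le> \<theta>" "\<theta> \<le> b"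
  shows "g \<theta> = g a"
proof -
  note chain = locally_increasing_chain[where a = a and b = b and h = h and g = g, OF d local]
  have "h a \<le> h \<theta> \<and> (h a = h \<theta> \<longrightarrow> g a = g \<theta>)"
    using chain[of a \<theta>] \<theta> by simp
  moreover have "h \<theta> \<le> h b"
    using chain[of \<theta> b] \<theta> by simp
  ultimately show ?thesis using loop by auto
qed

text \<open>A directed loop whose phase admits a continuous lift is constant: by uniform
  continuity the lift varies by less than \<open>\<pi>/3\<close> on short arcs.\<close>
lemma directed_loop_with_phase_lift_constant:
  assumes sm: "stream_map circle_top circle_circ (real_top X act) (real_circ X act) \<gamma>"
    and cont: "continuous_on UNIV h" and lift: "\<And>\<phi>. phase (\<gamma> (cis \<phi>)) = cis (h \<phi>)"
    and loop: "h (2 * pi) = h 0"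
    and z: "z \<in> sphere 0 1"
  shows "\<gamma> z = \<gamma> 1"
proof -
  have "uniformly_continuous_on {0..2*pi} h"
    by (rule compact_uniformly_continuous[OF continuous_on_subset[OF cont]]) auto
  then obtain d where d: "d > 0"
    and close: "\<And>x x'. x \<in> {0..2*pi} \<Longrightarrow> x' \<in> {0..2*pi} \<Longrightarrow> dist x' x < d \<Longrightarrow> dist (h x') (h x) < pi/3"
    unfolding uniformly_continuous_on_def by (metis pi_gt_zero divide_pos_pos zero_less_numeral)
  have local: "h \<theta> \<le> h \<theta>' \<and> (h \<theta> = h \<theta>' \<longrightarrow> (\<gamma> \<circ> cis) \<theta> = (\<gamma> \<circ> cis) \<theta>')"
    if "0 \<le> \<theta>" "\<theta> \<le> \<theta>'" "\<theta>' \<le> 2*pi" "\<theta>' - \<theta> < d" for \<theta> \<theta>'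
  proof -
    have "\<bar>h \<phi> - h \<theta>\<bar> < pi/3" if "\<theta> \<le> \<phi>" "\<phi> \<le> \<theta>'" for \<phi>
      using close[of \<theta> \<phi>] that \<open>0 \<le> \<theta>\<close> \<open>\<theta>' \<le> 2*pi\<close> \<open>\<theta>' - \<theta> < d\<close>
      by (simp add: dist_real_def)
    from short_arc_increasing[OF sm lift this that(2)] show ?thesis by simp
  qed
  have arg: "z = cis (Arg2pi z)" "0 \<le> Arg2pi z" "Arg2pi z \<le> 2 * pi"
    using z Arg2pi[of z] by (auto simp: is_Arg_def cis_conv_exp)
  have "(\<gamma> \<circ> cis) (Arg2pi z) = (\<gamma> \<circ> cis) 0"
    by (rule locally_increasing_loop_constant[OF d local loop]) (use arg in auto)
  then show ?thesis using arg(1) by simp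
qed

text \<open>If \<open>\<gamma>\<close> is null-homotopic, so is its phase, which therefore has a continuous logarithm.\<close>
lemma nullhomotopic_phase_lift:
  assumes "homotopic_with (\<lambda>_. True) circle_top (real_top X act) \<gamma> (\<lambda>_. c)"
  obtains h where "continuous_on UNIV h" "\<And>\<phi>. phase (\<gamma> (cis \<phi>)) = cis (h \<phi>)"
    "h (2 * pi) = h 0"
proof -
  have "continuous_map (real_top X act) (top_of_set (sphere 0 1)) phase"
    by (rule continuous_map_into_subtopology[OF continuous_map_phase]) (auto intro: phase_in_sphere)
  from homotopic_with_compose_continuous_map_left[OF assms this]
  have "homotopic_with_canon (\<lambda>_. True) (sphere 0 1) (sphere 0 1) (phase \<circ> \<gamma>) (\<lambda>_. phase c)"
    by (simp add: circle_top_def o_def)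
  then obtain g where g: "continuous_on (sphere 0 1) g"
    and log: "\<forall>z\<in>sphere 0 1. (phase \<circ> \<gamma>) z = exp (\<i> * of_real (g z))"
    using inessential_eq_continuous_logarithm_circle[of "sphere 0 1" "phase \<circ> \<gamma>"] by blast
  have "continuous_on UNIV (\<lambda>\<phi>. cis \<phi>)" by (simp add: cis_conv_exp continuous_intros)
  then have "continuous_on UNIV (\<lambda>\<phi>. g (cis \<phi>))"
    by (rule continuous_on_compose2[OF g]) auto
  moreover have "phase (\<gamma> (cis \<phi>)) = cis (g (cis \<phi>))" for \<phi>
    using log by (simp add: cis_conv_exp)
  ultimately show ?thesis by (intro that[of "\<lambda>\<phi>. g (cis \<phi>)"]) simp_all
qed

theorem mainTheorem5:
  fixes X :: "nat \<Rightarrow> 'a set" and act :: "cmor \<Rightarrow> 'a \<Rightarrow> 'a"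
    and \<gamma> :: "complex \<Rightarrow> (nat \<times> 'a \<times> (nat \<Rightarrow> real)) set"
  assumes "precubical X act"
    and "stream_map circle_top circle_circ (real_top X act) (real_circ X act) \<gamma>"
  shows "(\<exists>c. \<forall>z\<in>sphere 0 1. \<gamma> z = c) \<longleftrightarrow>
         (\<exists>a\<in>topspace (real_top X act).
            homotopic_with (\<lambda>_. True) circle_top (real_top X act) \<gamma> (\<lambda>_. a))"
proof
  have cont: "continuous_map circle_top (real_top X act) \<gamma>"
    using assms(2) by (simp add: stream_map_def)
  assume "\<exists>c. \<forall>z\<in>sphere 0 1. \<gamma> z = c"
  then obtain c where c: "\<forall>z\<in>sphere 0 1. \<gamma> z = c" by blast
  then have "c \<in> topspace (real_top X act)"
    using continuous_map_image_subset_topspace[OF cont]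
    by (metis circle_top_def image_subset_iff norm_one mem_sphere_0 topspace_euclidean_subtopology)
  moreover have "homotopic_with (\<lambda>_. True) circle_top (real_top X act) \<gamma> (\<lambda>_. c)"
    by (rule homotopic_with_equal) (use cont c in \<open>auto simp: circle_top_def\<close>)
  ultimately show "\<exists>a\<in>topspace (real_top X act).
      homotopic_with (\<lambda>_. True) circle_top (real_top X act) \<gamma> (\<lambda>_. a)" by blast
next
  assume "\<exists>a\<in>topspace (real_top X act).
      homotopic_with (\<lambda>_. True) circle_top (real_top X act) \<gamma> (\<lambda>_. a)"
  then obtain h where "continuous_on UNIV h" "\<And>\<phi>. phase (\<gamma> (cis \<phi>)) = cis (h \<phi>)"
    "h (2 * pi) = h 0"
    using nullhomotopic_phase_lift by blast
  then show "\<exists>c. \<forall>z\<in>sphere 0 1. \<gamma> z = c"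
    using directed_loop_with_phase_lift_constant[OF assms(2)] by blast
qed

end
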